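(* There exists $n_0$ such that the following holds for all $n\ge n_0$. Let $T\in\mathbb{C}^{n\times n\times n\times n}$ with $\|T\|_F=1$, and let $M=n^2\max_{i,j,k,l}|T_{ijkl}|$. Let $\mathrm{OPT}_T=\max_{\vec x,\vec y,\vec u,\vec v\in\mathbb{C}^n\setminus\{0\}}\frac{|\langle T,\vec x\otimes\vec y\otimes\vec u\otimes\vec v\rangle|}{\|\vec x\|_2\|\vec y\|_2\|\vec u\|_2\|\vec v\|_2}$, let $|\psi_T\rangle=\sum_{i,j,k,l\in[n]}T_{ijkl}|e_i\rangle\otimes|e_j\rangle\otimes|e_k\rangle\otimes|e_l\rangle$ (a $4n$-qubit state), and let $\mathrm{OPT}_{\psi}=\max|\langle\sigma|\psi_T\rangle|$ over all $4n$-qubit pure product states $|\sigma\rangle=|\sigma_1\rangle\otimes\cdots\otimes|\sigma_{4n}\rangle$. Then \[ e^{-2}\mathrm{OPT}_T-\frac{10M}{n^{0.2}}\le\mathrm{OPT}_{\psi}\le e^{-2}\mathrm{OPT}_T+\frac{10}{n^{0.1}}+\frac{10M}{n^{0.2}}. \]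
   Context: $|e_i\rangle$ is the $n$-qubit computational basis state with $|1\rangle$ on qubit $i$ and $|0\rangle$ elsewhere. $\langle T,X\rangle=\sum_{ijkl}T_{ijkl}X_{ijkl}$, and $\|T\|_F$ is the Frobenius norm. *)

theory Defs
  imports "HOL-Analysis.Analysis"
begin

text \<open>Tensors T in C^(n x n x n x n) are functions nat => nat => nat => nat => complex,
  only entries with indices < n being relevant (indices 0..n-1 stand for [n]).
  Vectors in C^n are functions nat => complex, coordinates < n relevant.\<close>

definition frob :: "nat \<Rightarrow> (nat \<Rightarrow> nat \<Rightarrow> nat \<Rightarrow> nat \<Rightarrow> complex) \<Rightarrow> real" where
  "frob n T = sqrt (\<Sum>i<n. \<Sum>j<n. \<Sum>k<n. \<Sum>l<n. (cmod (T i j k l))\<^sup>2)"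

definition max_entry :: "nat \<Rightarrow> (nat \<Rightarrow> nat \<Rightarrow> nat \<Rightarrow> nat \<Rightarrow> complex) \<Rightarrow> real" where
  "max_entry n T = Max {cmod (T i j k l) | i j k l. i < n \<and> j < n \<and> k < n \<and> l < n}"

definition vnorm :: "nat \<Rightarrow> (nat \<Rightarrow> complex) \<Rightarrow> real" where
  "vnorm n x = sqrt (\<Sum>i<n. (cmod (x i))\<^sup>2)"

definition nonzero_vec :: "nat \<Rightarrow> (nat \<Rightarrow> complex) \<Rightarrow> bool" where
  "nonzero_vec n x \<longleftrightarrow> (\<exists>i<n. x i \<noteq> 0)"

definition tpair :: "nat \<Rightarrow> (nat \<Rightarrow> nat \<Rightarrow> nat \<Rightarrow> nat \<Rightarrow> complex) \<Rightarrow>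
    (nat \<Rightarrow> complex) \<Rightarrow> (nat \<Rightarrow> complex) \<Rightarrow> (nat \<Rightarrow> complex) \<Rightarrow> (nat \<Rightarrow> complex) \<Rightarrow> complex" where
  "tpair n T x y u v = (\<Sum>i<n. \<Sum>j<n. \<Sum>k<n. \<Sum>l<n. T i j k l * x i * y j * u k * v l)"

definition OPT_T :: "nat \<Rightarrow> (nat \<Rightarrow> nat \<Rightarrow> nat \<Rightarrow> nat \<Rightarrow> complex) \<Rightarrow> real" where
  "OPT_T n T = Sup {cmod (tpair n T x y u v) / (vnorm n x * vnorm n y * vnorm n u * vnorm n v) | x y u v.
      nonzero_vec n x \<and> nonzero_vec n y \<and> nonzero_vec n u \<and> nonzero_vec n v}"

text \<open>Computational basis states of m qubits are bit lists of length m (qubit q is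
  entry q; True = |1>). |e_i> on n qubits is the list with True exactly at position i.\<close>
definition basis_e :: "nat \<Rightarrow> nat \<Rightarrow> bool list" where
  "basis_e n i = map (\<lambda>q. q = i) [0..<n]"

definition psi :: "nat \<Rightarrow> (nat \<Rightarrow> nat \<Rightarrow> nat \<Rightarrow> nat \<Rightarrow> complex) \<Rightarrow> bool list \<Rightarrow> complex" where
  "psi n T bs = (\<Sum>i<n. \<Sum>j<n. \<Sum>k<n. \<Sum>l<n.
      if bs = basis_e n i @ basis_e n j @ basis_e n k @ basis_e n l then T i j k l else 0)"

text \<open>A product state |sigma_0> (x) ... (x) |sigma_(m-1)>; sigma q b is the amplitude
  of qubit q on |b>.  Its amplitude on a basis state bs is the product.\<close>
definition prod_amp :: "(nat \<Rightarrow> bool \<Rightarrow> complex) \<Rightarrow> bool list \<Rightarrow> complex" where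
  "prod_amp \<sigma> bs = (\<Prod>q<length bs. \<sigma> q (bs ! q))"

definition pure_product_state :: "nat \<Rightarrow> (nat \<Rightarrow> bool \<Rightarrow> complex) \<Rightarrow> bool" where
  "pure_product_state m \<sigma> \<longleftrightarrow> (\<forall>q<m. (cmod (\<sigma> q False))\<^sup>2 + (cmod (\<sigma> q True))\<^sup>2 = 1)"

definition braket :: "nat \<Rightarrow> (bool list \<Rightarrow> complex) \<Rightarrow> (bool list \<Rightarrow> complex) \<Rightarrow> complex" where
  "braket m s phi = (\<Sum>bs\<in>{bs. length bs = m}. cnj (s bs) * phi bs)"

definition OPT_psi :: "nat \<Rightarrow> (nat \<Rightarrow> nat \<Rightarrow> nat \<Rightarrow> nat \<Rightarrow> complex) \<Rightarrow> real" where
  "OPT_psi n T = Sup {cmod (braket (4*n) (prod_amp \<sigma>) (psi n T)) | \<sigma>. pure_product_state (4*n) \<sigma>}"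

end

theory Submission
  imports Defs
begin

(* Only the one-hot basis states e_i carry amplitude in psi_T, so for a product state sigma
   the overlap <sigma|psi_T> is the pairing <T, x (x) y (x) u (x) v>, where x_i is the
   (conjugated) amplitude of the k-th block of n qubits on e_i:
   x_i = sigma_i(1) * prod_{q ~= i} sigma_q(0), and |x_i|^2 = p_i * prod_{q ~= i} (1 - p_q)
   with p_q = |sigma_q(1)|^2.

   Lower bound: encoding a unit vector w by the qubits proportional to |0> + cnj(w_q) |1>
   yields x = c * w with c = prod_q (1 + |w_q|^2)^(-1/2) >= e^(-1/2); four blocks give e^(-2).

   Upper bound: split every block at the threshold tau = n^(-1/10). The light coordinates
   (p_i <= tau) form a vector of squared norm at most s * e^(tau - s) <= e^(tau - 1), where s is
   their total probability, so they contribute at most OPT_T * e^(2 tau - 2). The heavy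
   coordinates (p_i > tau) damp each other so strongly that their l1 norm is at most 2 / tau,
   and every term containing a heavy part is bounded by max |T_ijkl| times a product of
   l1 norms, each at most 2 sqrt n. *)

lemma norm_sum_mult_le_sqrt:
  fixes f g :: "'a \<Rightarrow> complex"
  shows "cmod (\<Sum>a\<in>A. f a * g a) \<le> sqrt (\<Sum>a\<in>A. (cmod (f a))\<^sup>2) * sqrt (\<Sum>a\<in>A. (cmod (g a))\<^sup>2)"
proof -
  have "(\<Sum>a\<in>A. cmod (f a) * cmod (g a))\<^sup>2 \<le> (\<Sum>a\<in>A. (cmod (f a))\<^sup>2) * (\<Sum>a\<in>A. (cmod (g a))\<^sup>2)"
    by (rule Cauchy_Schwarz_ineq_sum)
  then have "(\<Sum>a\<in>A. cmod (f a) * cmod (g a)) \<le> sqrt (\<Sum>a\<in>A. (cmod (f a))\<^sup>2) * sqrt (\<Sum>a\<in>A. (cmod (g a))\<^sup>2)"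
    by (metis real_le_rsqrt real_sqrt_mult)
  moreover have "cmod (\<Sum>a\<in>A. f a * g a) \<le> (\<Sum>a\<in>A. cmod (f a) * cmod (g a))"
    by (rule order_trans[OF norm_sum]) (simp add: norm_mult)
  ultimately show ?thesis by linarith
qed

lemma sum_product_4:
  fixes a :: "'a \<Rightarrow> 'r::comm_semiring_1" and b :: "'b \<Rightarrow> 'r" and c :: "'c \<Rightarrow> 'r" and d :: "'d \<Rightarrow> 'r"
  shows "(\<Sum>i\<in>A. \<Sum>j\<in>B. \<Sum>k\<in>C. \<Sum>l\<in>D. a i * b j * c k * d l) = sum a A * sum b B * sum c C * sum d D"
proof -
  have "(\<Sum>i\<in>A. \<Sum>j\<in>B. \<Sum>k\<in>C. \<Sum>l\<in>D. a i * b j * c k * d l)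
      = (\<Sum>i\<in>A. a i * (\<Sum>j\<in>B. b j * (\<Sum>k\<in>C. c k * (\<Sum>l\<in>D. d l))))"
    by (simp add: sum_distrib_left mult.assoc)
  then show ?thesis
    by (simp add: sum_distrib_right mult.assoc)
qed

lemma mult_mono_4:
  fixes a b c d A B C D :: real
  assumes "0 \<le> a" "a \<le> A" "0 \<le> b" "b \<le> B" "0 \<le> c" "c \<le> C" "0 \<le> d" "d \<le> D"
  shows "a * b * c * d \<le> A * B * C * D"
  using assms by (intro mult_mono) (auto intro: mult_nonneg_nonneg order_trans)

lemma vnorm_nonneg: "0 \<le> vnorm n x"
  by (simp add: vnorm_def sum_nonneg)

lemma vnorm_square: "(vnorm n x)\<^sup>2 = (\<Sum>i<n. (cmod (x i))\<^sup>2)"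
  by (simp add: vnorm_def sum_nonneg)

lemma vnorm_pos: "nonzero_vec n x \<Longrightarrow> 0 < vnorm n x"
  unfolding nonzero_vec_def vnorm_def
  by (auto intro!: sum_pos2 simp: sum_nonneg)

lemma frob_nonneg: "0 \<le> frob n T"
  by (simp add: frob_def sum_nonneg)

lemma tpair_eq_sum_product:
  "tpair n T x y u v =
     (\<Sum>(i,j,k,l)\<in>{..<n}\<times>{..<n}\<times>{..<n}\<times>{..<n}. T i j k l * (x i * y j * u k * v l))"
  unfolding tpair_def by (simp add: sum.cartesian_product mult.assoc)

lemma norm_tpair_le_frob:
  "cmod (tpair n T x y u v) \<le> frob n T * (vnorm n x * vnorm n y * vnorm n u * vnorm n v)"
proof -
  let ?P = "{..<n}\<times>{..<n}\<times>{..<n}\<times>{..<n}"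
  have "(\<Sum>(i,j,k,l)\<in>?P. (cmod (T i j k l))\<^sup>2) = (frob n T)\<^sup>2"
    by (simp add: frob_def sum_nonneg flip: sum.cartesian_product)
  moreover have "(\<Sum>(i,j,k,l)\<in>?P. (cmod (x i * y j * u k * v l))\<^sup>2)
      = (vnorm n x * vnorm n y * vnorm n u * vnorm n v)\<^sup>2"
    by (simp add: sum.cartesian_product[symmetric] norm_mult power_mult_distrib vnorm_square
        sum_product_4)
  moreover have "cmod (tpair n T x y u v) \<le> sqrt (\<Sum>(i,j,k,l)\<in>?P. (cmod (T i j k l))\<^sup>2)
      * sqrt (\<Sum>(i,j,k,l)\<in>?P. (cmod (x i * y j * u k * v l))\<^sup>2)"
    using norm_sum_mult_le_sqrt[of "\<lambda>(i,j,k,l). T i j k l" "\<lambda>(i,j,k,l). x i * y j * u k * v l" ?P]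
    by (simp add: tpair_eq_sum_product case_prod_beta)
  ultimately show ?thesis
    by (simp add: frob_nonneg vnorm_nonneg)
qed

definition l1 :: "nat \<Rightarrow> (nat \<Rightarrow> complex) \<Rightarrow> real" where
  "l1 n x = (\<Sum>i<n. cmod (x i))"

lemma l1_nonneg: "0 \<le> l1 n x"
  by (simp add: l1_def sum_nonneg)

lemma l1_le_sqrt_vnorm: "l1 n x \<le> sqrt (real n) * vnorm n x"
proof -
  have "(\<Sum>i<n. cmod (x i) * 1)\<^sup>2 \<le> (\<Sum>i<n. (cmod (x i))\<^sup>2) * (\<Sum>i<n. 1\<^sup>2)"
    by (rule Cauchy_Schwarz_ineq_sum)
  then have "l1 n x \<le> sqrt ((vnorm n x)\<^sup>2 * real n)"
    by (intro real_le_rsqrt) (simp add: l1_def vnorm_square)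
  then show ?thesis
    by (simp add: real_sqrt_mult vnorm_nonneg mult.commute)
qed

lemma norm_tpair_le_l1:
  assumes "\<And>i j k l. i < n \<Longrightarrow> j < n \<Longrightarrow> k < n \<Longrightarrow> l < n \<Longrightarrow> cmod (T i j k l) \<le> m"
  shows "cmod (tpair n T x y u v) \<le> m * (l1 n x * l1 n y * l1 n u * l1 n v)"
proof -
  let ?P = "{..<n}\<times>{..<n}\<times>{..<n}\<times>{..<n}"
  have "cmod (tpair n T x y u v) \<le> (\<Sum>(i,j,k,l)\<in>?P. cmod (T i j k l * (x i * y j * u k * v l)))"
    unfolding tpair_eq_sum_product by (rule order_trans[OF norm_sum]) (simp add: case_prod_beta)
  also have "\<dots> \<le> (\<Sum>(i,j,k,l)\<in>?P. m * (cmod (x i) * cmod (y j) * cmod (u k) * cmod (v l)))"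
    by (rule sum_mono) (auto simp: norm_mult intro!: mult_right_mono assms)
  also have "\<dots> = m * (\<Sum>(i,j,k,l)\<in>?P. cmod (x i) * cmod (y j) * cmod (u k) * cmod (v l))"
    by (simp add: sum_distrib_left case_prod_beta)
  also have "(\<Sum>(i,j,k,l)\<in>?P. cmod (x i) * cmod (y j) * cmod (u k) * cmod (v l))
      = l1 n x * l1 n y * l1 n u * l1 n v"
    unfolding l1_def sum_product_4[symmetric] by (simp only: sum.cartesian_product)
  finally show ?thesis .
qed

lemma max_entry_ge:
  assumes "i < n" "j < n" "k < n" "l < n"
  shows "cmod (T i j k l) \<le> max_entry n T"
proof -
  have "{cmod (T i j k l) | i j k l. i < n \<and> j < n \<and> k < n \<and> l < n}
      \<subseteq> (\<lambda>(i,j,k,l). cmod (T i j k l)) ` ({..<n}\<times>{..<n}\<times>{..<n}\<times>{..<n})"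
    by force
  then have "finite {cmod (T i j k l) | i j k l. i < n \<and> j < n \<and> k < n \<and> l < n}"
    by (rule finite_subset) auto
  then show ?thesis
    unfolding max_entry_def by (rule Max_ge) (use assms in blast)
qed

lemma max_entry_nonneg: "0 < n \<Longrightarrow> 0 \<le> max_entry n T"
  using max_entry_ge[of 0 n 0 0 0 T] norm_ge_zero order_trans by blast

lemma tpair_split:
  assumes "x = (\<lambda>i. x' i + x'' i)" "y = (\<lambda>i. y' i + y'' i)"
    "u = (\<lambda>i. u' i + u'' i)" "v = (\<lambda>i. v' i + v'' i)"
  shows "tpair n T x y u v = tpair n T x' y' u' v' + tpair n T x'' y u v + tpair n T x' y'' u v
     + tpair n T x' y' u'' v + tpair n T x' y' u' v''"
  unfolding assms tpair_def by (simp add: sum.distrib[symmetric] algebra_simps)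

lemma tpair_scale:
  "tpair n T (\<lambda>i. x i * a) (\<lambda>i. y i * b) (\<lambda>i. u i * c) (\<lambda>i. v i * d)
     = (a * b * c * d) * tpair n T x y u v"
  by (simp add: tpair_def sum_distrib_left mult_ac)

lemma tpair_cong:
  assumes "\<And>i. i < n \<Longrightarrow> x i = x' i" "\<And>i. i < n \<Longrightarrow> y i = y' i"
    "\<And>i. i < n \<Longrightarrow> u i = u' i" "\<And>i. i < n \<Longrightarrow> v i = v' i"
  shows "tpair n T x y u v = tpair n T x' y' u' v'"
  unfolding tpair_def by (intro sum.cong refl) (simp add: assms)

definition tensor_ratios :: "nat \<Rightarrow> (nat \<Rightarrow> nat \<Rightarrow> nat \<Rightarrow> nat \<Rightarrow> complex) \<Rightarrow> real set" where
  "tensor_ratios n T = {cmod (tpair n T x y u v) / (vnorm n x * vnorm n y * vnorm n u * vnorm n v) | x y u v.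
      nonzero_vec n x \<and> nonzero_vec n y \<and> nonzero_vec n u \<and> nonzero_vec n v}"

lemma OPT_T_eq_Sup: "OPT_T n T = Sup (tensor_ratios n T)"
  by (simp add: OPT_T_def tensor_ratios_def)

lemma tensor_ratios_nonempty:
  assumes "0 < n"
  shows "tensor_ratios n T \<noteq> {}"
proof -
  have "nonzero_vec n (\<lambda>_. 1)"
    using assms by (auto simp: nonzero_vec_def)
  then show ?thesis
    unfolding tensor_ratios_def by blast
qed

lemma tensor_ratio_bounds:
  assumes "frob n T = 1" "r \<in> tensor_ratios n T"
  shows "0 \<le> r" "r \<le> 1"
proof -
  obtain x y u v where r: "r = cmod (tpair n T x y u v) / (vnorm n x * vnorm n y * vnorm n u * vnorm n v)"
    and nz: "nonzero_vec n x" "nonzero_vec n y" "nonzero_vec n u" "nonzero_vec n v"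
    using assms(2) unfolding tensor_ratios_def by blast
  have "0 < vnorm n x * vnorm n y * vnorm n u * vnorm n v"
    using nz by (simp add: vnorm_pos)
  then show "0 \<le> r" "r \<le> 1"
    using norm_tpair_le_frob[of n T x y u v] assms(1) by (simp_all add: r divide_le_eq)
qed

lemma bdd_above_tensor_ratios: "frob n T = 1 \<Longrightarrow> bdd_above (tensor_ratios n T)"
  using tensor_ratio_bounds by (meson bdd_above.I)

lemma OPT_T_bounds:
  assumes "0 < n" "frob n T = 1"
  shows "0 \<le> OPT_T n T" "OPT_T n T \<le> 1"
proof -
  obtain r where r: "r \<in> tensor_ratios n T"
    using tensor_ratios_nonempty[OF assms(1)] by blast
  show "0 \<le> OPT_T n T"
    unfolding OPT_T_eq_Sup
    by (rule cSup_upper2[OF r _ bdd_above_tensor_ratios[OF assms(2)]])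
      (rule tensor_ratio_bounds[OF assms(2) r])
  show "OPT_T n T \<le> 1"
    unfolding OPT_T_eq_Sup
    by (rule cSup_least) (auto simp: tensor_ratios_nonempty[OF assms(1)] tensor_ratio_bounds[OF assms(2)])
qed

lemma norm_tpair_le_OPT_T:
  assumes "0 < n" "frob n T = 1"
  shows "cmod (tpair n T x y u v) \<le> OPT_T n T * (vnorm n x * vnorm n y * vnorm n u * vnorm n v)"
proof (cases "nonzero_vec n x \<and> nonzero_vec n y \<and> nonzero_vec n u \<and> nonzero_vec n v")
  case True
  have "cmod (tpair n T x y u v) / (vnorm n x * vnorm n y * vnorm n u * vnorm n v) \<le> OPT_T n T"
    unfolding OPT_T_eq_Sup
    by (rule cSup_upper[OF _ bdd_above_tensor_ratios[OF assms(2)]]) (use True in \<open>auto simp: tensor_ratios_def\<close>)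
  moreover have "0 < vnorm n x * vnorm n y * vnorm n u * vnorm n v"
    using True by (simp add: vnorm_pos)
  ultimately show ?thesis by (simp add: divide_le_eq)
next
  case False
  then have "tpair n T x y u v = 0"
    by (auto simp: nonzero_vec_def tpair_def)
  then show ?thesis
    using OPT_T_bounds[OF assms] by (simp add: vnorm_nonneg)
qed

definition one_hot_amp :: "nat \<Rightarrow> (nat \<Rightarrow> bool \<Rightarrow> complex) \<Rightarrow> nat \<Rightarrow> complex" where
  "one_hot_amp n \<rho> i = (\<Prod>q<n. \<rho> q (q = i))"

definition block_amp :: "nat \<Rightarrow> (nat \<Rightarrow> bool \<Rightarrow> complex) \<Rightarrow> nat \<Rightarrow> nat \<Rightarrow> complex" where
  "block_amp n \<sigma> k i = cnj (one_hot_amp n (\<lambda>q. \<sigma> (k * n + q)) i)"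

lemma prod_lessThan_add: "(\<Prod>q<m + (k::nat). g q) = (\<Prod>q<m. g q) * (\<Prod>q<k. g (m + q))"
  by (induction k) (simp_all add: mult.assoc)

lemma prod_amp_append:
  "prod_amp \<sigma> (bs @ cs) = prod_amp \<sigma> bs * prod_amp (\<lambda>q. \<sigma> (length bs + q)) cs"
  unfolding prod_amp_def prod_lessThan_add length_append
  by (intro arg_cong2[where f = "(*)"] prod.cong) (auto simp: nth_append)

lemma length_basis_e [simp]: "length (basis_e n i) = n"
  by (simp add: basis_e_def)

lemma prod_amp_basis_e: "prod_amp \<rho> (basis_e n i) = one_hot_amp n \<rho> i"
  unfolding prod_amp_def one_hot_amp_def basis_e_def by (rule prod.cong) auto

lemma prod_amp_basis_e_4:
  "prod_amp \<sigma> (basis_e n i @ basis_e n j @ basis_e n k @ basis_e n l)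
     = cnj (block_amp n \<sigma> 0 i * block_amp n \<sigma> 1 j * block_amp n \<sigma> 2 k * block_amp n \<sigma> 3 l)"
  by (simp add: prod_amp_append prod_amp_basis_e block_amp_def mult.assoc
      numeral_eq_Suc add.assoc)

lemma braket_psi_eq_tpair:
  "braket (4 * n) (prod_amp \<sigma>) (psi n T)
     = tpair n T (block_amp n \<sigma> 0) (block_amp n \<sigma> 1) (block_amp n \<sigma> 2) (block_amp n \<sigma> 3)"
proof -
  let ?E = "\<lambda>i j k l. basis_e n i @ basis_e n j @ basis_e n k @ basis_e n l"
  let ?L = "{bs::bool list. length bs = 4 * n}"
  have fin: "finite ?L"
    using finite_lists_length_eq[of "UNIV :: bool set" "4 * n"] by simp
  have "braket (4 * n) (prod_amp \<sigma>) (psi n T) = (\<Sum>bs\<in>?L. \<Sum>i<n. \<Sum>j<n. \<Sum>k<n. \<Sum>l<n.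
      if bs = ?E i j k l then cnj (prod_amp \<sigma> bs) * T i j k l else 0)"
    unfolding braket_def psi_def sum_distrib_left by (intro sum.cong refl) simp
  also have "\<dots> = (\<Sum>i<n. \<Sum>j<n. \<Sum>k<n. \<Sum>l<n. \<Sum>bs\<in>?L.
      if bs = ?E i j k l then cnj (prod_amp \<sigma> bs) * T i j k l else 0)"
    by (simp only: sum.swap[where A = ?L])
  also have "\<dots> = (\<Sum>i<n. \<Sum>j<n. \<Sum>k<n. \<Sum>l<n. cnj (prod_amp \<sigma> (?E i j k l)) * T i j k l)"
    by (simp add: fin basis_e_def)
  finally show ?thesis
    by (simp add: prod_amp_basis_e_4 tpair_def mult_ac)
qed

definition prob_one :: "(nat \<Rightarrow> bool \<Rightarrow> complex) \<Rightarrow> nat \<Rightarrow> real" where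
  "prob_one \<rho> q = (cmod (\<rho> q True))\<^sup>2"

lemma pure_product_state_block:
  assumes "pure_product_state (4 * n) \<sigma>" "k < 4"
  shows "pure_product_state n (\<lambda>q. \<sigma> (k * n + q))"
proof -
  have "k * n + q < 4 * n" if "q < n" for q
  proof -
    have "k * n \<le> 3 * n" using assms(2) by simp
    then show ?thesis using that by linarith
  qed
  then show ?thesis
    using assms(1) by (simp add: pure_product_state_def)
qed

lemma prob_one_bounds:
  "pure_product_state n \<rho> \<Longrightarrow> q < n \<Longrightarrow> 0 \<le> prob_one \<rho> q \<and> prob_one \<rho> q \<le> 1"
  unfolding pure_product_state_def prob_one_def by (metis le_add_same_cancel2 zero_le_power2)

lemma one_hot_amp_eq:
  "i < n \<Longrightarrow> one_hot_amp n \<rho> i = \<rho> i True * (\<Prod>q\<in>{..<n}-{i}. \<rho> q False)"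
  unfolding one_hot_amp_def by (subst prod.remove[of _ i]) (auto intro!: prod.cong)

lemma norm_one_hot_amp_square:
  assumes "pure_product_state n \<rho>" "i < n"
  shows "(cmod (one_hot_amp n \<rho> i))\<^sup>2 = prob_one \<rho> i * (\<Prod>q\<in>{..<n}-{i}. 1 - prob_one \<rho> q)"
proof -
  have "(\<Prod>q\<in>{..<n}-{i}. (cmod (\<rho> q False))\<^sup>2) = (\<Prod>q\<in>{..<n}-{i}. 1 - prob_one \<rho> q)"
    using assms(1) by (intro prod.cong) (auto simp: pure_product_state_def prob_one_def algebra_simps)
  then show ?thesis
    using assms(2) by (simp add: one_hot_amp_eq norm_mult power_mult_distrib prob_one_def
        prod_norm[symmetric] prod_power_distrib)
qed

lemma prod_le_prod_subset:
  fixes f :: "'a \<Rightarrow> real"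
  assumes "finite A" "B \<subseteq> A" "\<And>q. q \<in> A \<Longrightarrow> 0 \<le> f q \<and> f q \<le> 1"
  shows "prod f A \<le> prod f B"
proof -
  have "prod f A = prod f (A - B) * prod f B"
    using assms by (simp add: prod.subset_diff)
  also have "\<dots> \<le> 1 * prod f B"
    using assms by (intro mult_right_mono prod_le_1 prod_nonneg) auto
  finally show ?thesis by simp
qed

lemma one_minus_le_exp_neg: "1 - t \<le> exp (- t :: real)"
  using exp_ge_add_one_self[of "- t"] by simp

lemma prod_one_minus_le_exp:
  fixes f :: "'a \<Rightarrow> real"
  assumes "finite A" "\<And>q. q \<in> A \<Longrightarrow> 0 \<le> f q \<and> f q \<le> 1"
  shows "(\<Prod>q\<in>A. 1 - f q) \<le> exp (- sum f A)"
proof -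
  have "(\<Prod>q\<in>A. 1 - f q) \<le> (\<Prod>q\<in>A. exp (- f q))"
    using assms(2) by (intro prod_mono) (auto simp: one_minus_le_exp_neg)
  also have "\<dots> = exp (- sum f A)"
    using exp_sum[of A "\<lambda>q. - f q"] assms(1) by (simp add: sum_negf)
  finally show ?thesis .
qed

lemma norm_one_hot_amp_square_le_exp:
  assumes "pure_product_state n \<rho>" "i \<in> S" "S \<subseteq> {..<n}"
  shows "(cmod (one_hot_amp n \<rho> i))\<^sup>2 \<le> prob_one \<rho> i * exp (- sum (prob_one \<rho>) (S - {i}))"
proof -
  have bounds: "\<And>q. q < n \<Longrightarrow> 0 \<le> prob_one \<rho> q \<and> prob_one \<rho> q \<le> 1"
    using prob_one_bounds[OF assms(1)] by blast
  have "(cmod (one_hot_amp n \<rho> i))\<^sup>2 = prob_one \<rho> i * (\<Prod>q\<in>{..<n}-{i}. 1 - prob_one \<rho> q)"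
    using assms by (intro norm_one_hot_amp_square) auto
  also have "\<dots> \<le> prob_one \<rho> i * (\<Prod>q\<in>S-{i}. 1 - prob_one \<rho> q)"
    using assms(2,3) bounds by (intro mult_left_mono prod_le_prod_subset) auto
  also have "\<dots> \<le> prob_one \<rho> i * exp (- sum (prob_one \<rho>) (S - {i}))"
    using assms(2,3) finite_subset[OF assms(3)] bounds
    by (intro mult_left_mono prod_one_minus_le_exp) auto
  finally show ?thesis .
qed

definition light_part :: "real \<Rightarrow> nat \<Rightarrow> (nat \<Rightarrow> bool \<Rightarrow> complex) \<Rightarrow> nat \<Rightarrow> complex" where
  "light_part \<tau> n \<rho> i = (if prob_one \<rho> i \<le> \<tau> then cnj (one_hot_amp n \<rho> i) else 0)"

definition heavy_part :: "real \<Rightarrow> nat \<Rightarrow> (nat \<Rightarrow> bool \<Rightarrow> complex) \<Rightarrow> nat \<Rightarrow> complex" where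
  "heavy_part \<tau> n \<rho> i = (if prob_one \<rho> i \<le> \<tau> then 0 else cnj (one_hot_amp n \<rho> i))"

lemma light_plus_heavy_part:
  "(\<lambda>i. cnj (one_hot_amp n \<rho> i)) = (\<lambda>i. light_part \<tau> n \<rho> i + heavy_part \<tau> n \<rho> i)"
  by (auto simp: light_part_def heavy_part_def)

lemma mult_exp_neg_le: "s * exp (- s) \<le> exp (- 1 :: real)"
proof -
  have "s * exp (- s) \<le> exp (s - 1) * exp (- s)"
    using exp_ge_add_one_self[of "s - 1"] by (intro mult_right_mono) auto
  then show ?thesis
    by (simp flip: exp_add)
qed

lemma vnorm_light_part_square_le:
  assumes "pure_product_state n \<rho>"
  shows "(vnorm n (light_part \<tau> n \<rho>))\<^sup>2 \<le> exp (\<tau> - 1)"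
proof -
  define S where "S = {i \<in> {..<n}. prob_one \<rho> i \<le> \<tau>}"
  define s where "s = sum (prob_one \<rho>) S"
  have S: "finite S" "S \<subseteq> {..<n}"
    by (auto simp: S_def)
  have "(vnorm n (light_part \<tau> n \<rho>))\<^sup>2 = (\<Sum>i\<in>S. (cmod (one_hot_amp n \<rho> i))\<^sup>2)"
    unfolding vnorm_square S_def light_part_def by (subst sum.inter_filter) (auto intro!: sum.cong)
  also have "\<dots> \<le> (\<Sum>i\<in>S. prob_one \<rho> i * exp (\<tau> - s))"
  proof (rule sum_mono)
    fix i assume i: "i \<in> S"
    have "sum (prob_one \<rho>) (S - {i}) = s - prob_one \<rho> i"
      using i S by (simp add: s_def sum_diff1)
    moreover have "prob_one \<rho> i \<le> \<tau>" "0 \<le> prob_one \<rho> i"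
      using i prob_one_bounds[OF assms] by (auto simp: S_def)
    ultimately have "prob_one \<rho> i * exp (- sum (prob_one \<rho>) (S - {i})) \<le> prob_one \<rho> i * exp (\<tau> - s)"
      by (intro mult_left_mono) auto
    then show "(cmod (one_hot_amp n \<rho> i))\<^sup>2 \<le> prob_one \<rho> i * exp (\<tau> - s)"
      using norm_one_hot_amp_square_le_exp[OF assms i S(2)] by linarith
  qed
  also have "\<dots> = s * exp (\<tau> - s)"
    by (simp add: s_def sum_distrib_right)
  also have "\<dots> = exp \<tau> * (s * exp (- s))"
    by (simp add: exp_diff exp_minus field_simps)
  also have "\<dots> \<le> exp \<tau> * exp (- 1)"
    by (intro mult_left_mono mult_exp_neg_le) simp
  finally show ?thesis
    by (simp flip: exp_add)
qed

lemma exp_neg_le_inverse_square: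
  fixes x :: real
  assumes "0 \<le> x"
  shows "exp (- x) \<le> (1 / (1 + x / 2))\<^sup>2"
proof -
  have "(1 + x / 2)\<^sup>2 \<le> (exp (x / 2))\<^sup>2"
    using assms exp_ge_add_one_self[of "x / 2"] by (intro power_mono) auto
  also have "\<dots> = exp x"
    by (simp flip: exp_double)
  finally show ?thesis
    using assms by (simp add: exp_minus power_divide inverse_eq_divide divide_left_mono)
qed

lemma l1_heavy_part_le:
  assumes "pure_product_state n \<rho>" "0 < \<tau>" "\<tau> \<le> 2"
  shows "l1 n (heavy_part \<tau> n \<rho>) \<le> 2 / \<tau>"
proof -
  define B where "B = {i \<in> {..<n}. \<tau> < prob_one \<rho> i}"
  (* each heavy amplitude is damped by the other card B - 1 heavy qubits, which stay in |0>
     with probability below 1 - tau *)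
  define c where "c = 1 / (1 + \<tau> * (real (card B) - 1) / 2)"
  have B: "finite B" "B \<subseteq> {..<n}"
    by (auto simp: B_def)
  have "l1 n (heavy_part \<tau> n \<rho>) = (\<Sum>i\<in>B. cmod (one_hot_amp n \<rho> i))"
    unfolding l1_def B_def heavy_part_def by (subst sum.inter_filter) (auto intro!: sum.cong)
  also have "\<dots> \<le> (\<Sum>i\<in>B. c)"
  proof (rule sum_mono)
    fix i assume i: "i \<in> B"
    have "0 < card B"
      using i B(1) card_gt_0_iff by blast
    then have card: "real (card (B - {i})) = real (card B) - 1"
      using i B by (simp add: card_Diff_singleton of_nat_diff)
    have sum_ge: "\<tau> * (real (card B) - 1) \<le> sum (prob_one \<rho>) (B - {i})"
      using sum_bounded_below[of "B - {i}" \<tau> "prob_one \<rho>"] card by (auto simp: B_def mult.commute)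
    have nonneg: "0 \<le> \<tau> * (real (card B) - 1)"
      using \<open>0 < card B\<close> assms(2) by simp
    have "(cmod (one_hot_amp n \<rho> i))\<^sup>2 \<le> prob_one \<rho> i * exp (- sum (prob_one \<rho>) (B - {i}))"
      by (rule norm_one_hot_amp_square_le_exp[OF assms(1) i B(2)])
    also have "\<dots> \<le> 1 * exp (- (\<tau> * (real (card B) - 1)))"
      using i prob_one_bounds[OF assms(1)] sum_ge
      by (intro mult_mono) (auto simp: B_def)
    also have "\<dots> \<le> c\<^sup>2"
      unfolding c_def using exp_neg_le_inverse_square[OF nonneg]
      by simp
    finally have "(cmod (one_hot_amp n \<rho> i))\<^sup>2 \<le> c\<^sup>2" .
    moreover have "0 \<le> c"
      using nonneg by (simp add: c_def)
    ultimately show "cmod (one_hot_amp n \<rho> i) \<le> c"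
      by (rule power2_le_imp_le)
  qed
  also have "\<dots> \<le> 2 / \<tau>"
  proof (cases "card B = 0")
    case False
    then have "0 < 1 + \<tau> * (real (card B) - 1) / 2"
      using assms(2) by (simp add: add_pos_nonneg)
    with assms(2,3) show ?thesis
      by (simp add: c_def field_simps)
  qed (use assms(2) in simp)
  finally show ?thesis .
qed

lemma vnorm_light_part_le:
  assumes "pure_product_state n \<rho>"
  shows "vnorm n (light_part \<tau> n \<rho>) \<le> exp ((\<tau> - 1) / 2)"
proof (rule power2_le_imp_le)
  show "(vnorm n (light_part \<tau> n \<rho>))\<^sup>2 \<le> (exp ((\<tau> - 1) / 2))\<^sup>2"
    using vnorm_light_part_square_le[OF assms] by (simp add: power2_eq_square flip: exp_add)
qed simp

lemma l1_block_parts_le: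
  assumes "pure_product_state n \<rho>" "0 < \<tau>" "\<tau> \<le> 1" "2 / \<tau> \<le> sqrt (real n)"
  shows "l1 n (light_part \<tau> n \<rho>) \<le> 2 * sqrt (real n)"
    and "l1 n (\<lambda>i. cnj (one_hot_amp n \<rho> i)) \<le> 2 * sqrt (real n)"
proof -
  have "vnorm n (light_part \<tau> n \<rho>) \<le> 1"
    using vnorm_light_part_le[OF assms(1), of \<tau>] assms(3) by (simp add: order_trans)
  then have light: "l1 n (light_part \<tau> n \<rho>) \<le> sqrt (real n)"
    using l1_le_sqrt_vnorm[of n "light_part \<tau> n \<rho>"] mult_left_mono[of _ 1 "sqrt (real n)"]
    by fastforce
  then show "l1 n (light_part \<tau> n \<rho>) \<le> 2 * sqrt (real n)"
    using real_sqrt_ge_zero[of "real n"] by linarith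
  have "l1 n (\<lambda>i. cnj (one_hot_amp n \<rho> i)) = l1 n (light_part \<tau> n \<rho>) + l1 n (heavy_part \<tau> n \<rho>)"
    unfolding l1_def light_part_def heavy_part_def sum.distrib[symmetric] by (rule sum.cong) auto
  then show "l1 n (\<lambda>i. cnj (one_hot_amp n \<rho> i)) \<le> 2 * sqrt (real n)"
    using light l1_heavy_part_le[OF assms(1,2)] assms(3,4) by simp
qed

lemma norm_tpair_split_le:
  assumes entries: "\<And>i j k l. i < n \<Longrightarrow> j < n \<Longrightarrow> k < n \<Longrightarrow> l < n \<Longrightarrow> cmod (T i j k l) \<le> m"
    and split: "x = (\<lambda>i. x' i + x'' i)" "y = (\<lambda>i. y' i + y'' i)"
      "u = (\<lambda>i. u' i + u'' i)" "v = (\<lambda>i. v' i + v'' i)"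
    and small: "l1 n x'' \<le> \<beta>" "l1 n y'' \<le> \<beta>" "l1 n u'' \<le> \<beta>" "l1 n v'' \<le> \<beta>"
    and bounded: "l1 n x' \<le> L" "l1 n y' \<le> L" "l1 n u' \<le> L" "l1 n y \<le> L" "l1 n u \<le> L" "l1 n v \<le> L"
    and "0 \<le> m"
  shows "cmod (tpair n T x y u v) \<le> cmod (tpair n T x' y' u' v') + 4 * (m * (\<beta> * L * L * L))"
proof -
  have each: "cmod (tpair n T a b c d) \<le> m * (A * B * C * D)"
    if "l1 n a \<le> A" "l1 n b \<le> B" "l1 n c \<le> C" "l1 n d \<le> D" for a b c d A B C D
  proof -
    have "l1 n a * l1 n b * l1 n c * l1 n d \<le> A * B * C * D"
      using that by (intro mult_mono_4) (auto simp: l1_nonneg)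
    then show ?thesis
      using norm_tpair_le_l1[OF entries, where x = a and y = b and u = c and v = d] \<open>0 \<le> m\<close> mult_left_mono by fastforce
  qed
  have "cmod (tpair n T x y u v) \<le> cmod (tpair n T x' y' u' v') + cmod (tpair n T x'' y u v)
      + cmod (tpair n T x' y'' u v) + cmod (tpair n T x' y' u'' v) + cmod (tpair n T x' y' u' v'')"
    unfolding tpair_split[OF split, of n T] by (intro norm_triangle_le add_mono order_refl norm_triangle_ineq)
  also have "\<dots> \<le> cmod (tpair n T x' y' u' v') + m * (\<beta> * L * L * L) + m * (L * \<beta> * L * L)
      + m * (L * L * \<beta> * L) + m * (L * L * L * \<beta>)"
    using small bounded by (intro add_mono order_refl each)
  finally show ?thesis
    by (simp add: algebra_simps)
qed

lemma norm_braket_product_psi_le: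
  assumes "0 < n" "frob n T = 1" "pure_product_state (4 * n) \<sigma>"
    and "0 < \<tau>" "\<tau> \<le> 1" "2 / \<tau> \<le> sqrt (real n)"
  shows "cmod (braket (4 * n) (prod_amp \<sigma>) (psi n T))
    \<le> OPT_T n T * exp (2 * \<tau> - 2)
      + 4 * (max_entry n T * (2 / \<tau> * (2 * sqrt (real n)) * (2 * sqrt (real n)) * (2 * sqrt (real n))))"
proof -
  define \<rho> where "\<rho> k = (\<lambda>q. \<sigma> (k * n + q))" for k
  define S where "S k = light_part \<tau> n (\<rho> k)" for k
  have pure: "pure_product_state n (\<rho> k)" if "k < 4" for k
    unfolding \<rho>_def using pure_product_state_block[OF assms(3) that] .
  have block: "block_amp n \<sigma> k = (\<lambda>i. S k i + heavy_part \<tau> n (\<rho> k) i)" for k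
    unfolding S_def \<rho>_def block_amp_def[abs_def] by (rule light_plus_heavy_part)
  have l1_block: "l1 n (block_amp n \<sigma> k) \<le> 2 * sqrt (real n)" if "k < 4" for k
    unfolding block_amp_def using l1_block_parts_le(2)[OF pure[OF that] assms(4-6)] by (simp add: \<rho>_def)
  have l1_light: "l1 n (S k) \<le> 2 * sqrt (real n)" if "k < 4" for k
    unfolding S_def by (rule l1_block_parts_le(1)[OF pure[OF that] assms(4-6)])
  have "vnorm n (S 0) * vnorm n (S 1) * vnorm n (S 2) * vnorm n (S 3) \<le> (exp ((\<tau> - 1) / 2)) ^ 4"
    unfolding power4_eq_xxxx S_def using vnorm_light_part_le[OF pure]
    by (intro mult_mono_4) (auto simp: vnorm_nonneg)
  also have "\<dots> = exp (2 * \<tau> - 2)"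
    by (simp flip: exp_of_nat_mult add: field_simps)
  finally have "cmod (tpair n T (S 0) (S 1) (S 2) (S 3)) \<le> OPT_T n T * exp (2 * \<tau> - 2)"
    using norm_tpair_le_OPT_T[OF assms(1,2)] OPT_T_bounds[OF assms(1,2)]
    by (meson mult_left_mono order_trans)
  moreover have "cmod (tpair n T (block_amp n \<sigma> 0) (block_amp n \<sigma> 1) (block_amp n \<sigma> 2) (block_amp n \<sigma> 3))
    \<le> cmod (tpair n T (S 0) (S 1) (S 2) (S 3))
      + 4 * (max_entry n T * (2 / \<tau> * (2 * sqrt (real n)) * (2 * sqrt (real n)) * (2 * sqrt (real n))))"
    by (rule norm_tpair_split_le[OF max_entry_ge block block block block])
      (use assms(1,4,5) pure l1_block l1_light in \<open>auto simp: l1_heavy_part_le max_entry_nonneg\<close>)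
  ultimately show ?thesis
    by (simp add: braket_psi_eq_tpair)
qed

lemma vnorm_block_amp_le_1:
  assumes "pure_product_state (4 * n) \<sigma>" "k < 4"
  shows "vnorm n (block_amp n \<sigma> k) \<le> 1"
proof -
  let ?\<rho> = "\<lambda>q. \<sigma> (k * n + q)"
  have pure: "pure_product_state n ?\<rho>"
    by (rule pure_product_state_block[OF assms])
  have "vnorm n (block_amp n \<sigma> k) = vnorm n (light_part 1 n ?\<rho>)"
    unfolding vnorm_def block_amp_def light_part_def
    using prob_one_bounds[OF pure] by (intro arg_cong[where f = sqrt] sum.cong) auto
  also have "\<dots> \<le> 1"
    using vnorm_light_part_le[OF pure, of 1] by simp
  finally show ?thesis .
qed

lemma norm_braket_product_psi_le_frob:
  assumes "pure_product_state (4 * n) \<sigma>"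
  shows "cmod (braket (4 * n) (prod_amp \<sigma>) (psi n T)) \<le> frob n T"
proof -
  have "vnorm n (block_amp n \<sigma> 0) * vnorm n (block_amp n \<sigma> 1) * vnorm n (block_amp n \<sigma> 2)
      * vnorm n (block_amp n \<sigma> 3) \<le> 1 * 1 * 1 * 1"
    using vnorm_block_amp_le_1[OF assms] by (intro mult_mono_4) (auto simp: vnorm_nonneg)
  then have "frob n T * (vnorm n (block_amp n \<sigma> 0) * vnorm n (block_amp n \<sigma> 1)
      * vnorm n (block_amp n \<sigma> 2) * vnorm n (block_amp n \<sigma> 3)) \<le> frob n T"
    using mult_left_mono[OF _ frob_nonneg] by fastforce
  then show ?thesis
    unfolding braket_psi_eq_tpair using norm_tpair_le_frob order_trans by blast
qed

definition qubit_encoding :: "(nat \<Rightarrow> complex) \<Rightarrow> nat \<Rightarrow> bool \<Rightarrow> complex" where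
  "qubit_encoding w q b = of_real (1 / sqrt (1 + (cmod (w q))\<^sup>2)) * (if b then cnj (w q) else 1)"

definition concat_state :: "nat \<Rightarrow> (nat \<Rightarrow> nat \<Rightarrow> complex) \<Rightarrow> nat \<Rightarrow> bool \<Rightarrow> complex" where
  "concat_state n ws q = qubit_encoding (ws (q div n)) (q mod n)"

lemma pure_product_state_concat_state: "pure_product_state m (concat_state n ws)"
proof -
  have "(cmod (qubit_encoding w q False))\<^sup>2 + (cmod (qubit_encoding w q True))\<^sup>2 = 1" for w q
  proof -
    have pos: "0 < 1 + (cmod (w q))\<^sup>2"
      by (simp add: add_pos_nonneg)
    have "(cmod (qubit_encoding w q b))\<^sup>2 = (if b then (cmod (w q))\<^sup>2 else 1) / (1 + (cmod (w q))\<^sup>2)" for b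
      using pos by (simp add: qubit_encoding_def norm_divide power_divide)
    with pos show ?thesis
      by (simp flip: add_divide_distrib)
  qed
  then show ?thesis
    by (simp add: pure_product_state_def concat_state_def)
qed

lemma one_hot_amp_cong:
  "(\<And>q. q < n \<Longrightarrow> \<rho> q = \<rho>' q) \<Longrightarrow> one_hot_amp n \<rho> i = one_hot_amp n \<rho>' i"
  unfolding one_hot_amp_def by (rule prod.cong) auto

lemma block_amp_concat_state:
  assumes "i < n"
  shows "block_amp n (concat_state n ws) k i
    = ws k i * of_real (\<Prod>q<n. 1 / sqrt (1 + (cmod (ws k q))\<^sup>2))"
proof -
  let ?c = "\<lambda>q. 1 / sqrt (1 + (cmod (ws k q))\<^sup>2)"
  have "block_amp n (concat_state n ws) k i = cnj (one_hot_amp n (qubit_encoding (ws k)) i)"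
    unfolding block_amp_def concat_state_def by (intro arg_cong[where f = cnj] one_hot_amp_cong) simp
  also have "\<dots> = ws k i * of_real (?c i * (\<Prod>q\<in>{..<n}-{i}. ?c q))"
    using assms by (simp add: one_hot_amp_eq qubit_encoding_def prod.distrib mult_ac)
  also have "?c i * (\<Prod>q\<in>{..<n}-{i}. ?c q) = (\<Prod>q<n. ?c q)"
    using assms by (simp add: prod.remove)
  finally show ?thesis .
qed

lemma exp_neg_half_le_inverse_sqrt:
  fixes s :: real
  assumes "0 \<le> s"
  shows "exp (- (s / 2)) \<le> 1 / sqrt (1 + s)"
proof -
  have "sqrt (1 + s) \<le> exp (s / 2)"
    using assms exp_ge_add_one_self[of s]
    by (intro real_le_lsqrt) (simp_all add: power2_eq_square flip: exp_add)
  then show ?thesis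
    using assms by (simp add: exp_minus inverse_eq_divide divide_left_mono)
qed

lemma prod_inverse_sqrt_ge:
  fixes w :: "nat \<Rightarrow> complex"
  assumes "(\<Sum>q<n. (cmod (w q))\<^sup>2) \<le> 1"
  shows "exp (- (1 / 2)) \<le> (\<Prod>q<n. 1 / sqrt (1 + (cmod (w q))\<^sup>2))"
proof -
  have "exp (- (1 / 2)) \<le> exp (\<Sum>q<n. - ((cmod (w q))\<^sup>2 / 2))"
    using assms by (simp add: sum_negf flip: sum_divide_distrib)
  also have "\<dots> = (\<Prod>q<n. exp (- ((cmod (w q))\<^sup>2 / 2)))"
    by (rule exp_sum) simp
  also have "\<dots> \<le> (\<Prod>q<n. 1 / sqrt (1 + (cmod (w q))\<^sup>2))"
    by (intro prod_mono) (simp add: exp_neg_half_le_inverse_sqrt)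
  finally show ?thesis .
qed

lemma exists_product_state_ge:
  fixes ws :: "nat \<Rightarrow> nat \<Rightarrow> complex"
  assumes "\<And>k. k < 4 \<Longrightarrow> (\<Sum>i<n. (cmod (ws k i))\<^sup>2) \<le> 1"
  shows "\<exists>\<sigma>. pure_product_state (4 * n) \<sigma> \<and>
    exp (- 2) * cmod (tpair n T (ws 0) (ws 1) (ws 2) (ws 3)) \<le> cmod (braket (4 * n) (prod_amp \<sigma>) (psi n T))"
proof (intro exI conjI)
  define C where "C k = (\<Prod>q<n. 1 / sqrt (1 + (cmod (ws k q))\<^sup>2))" for k
  have C: "exp (- (1 / 2)) \<le> C k" if "k < 4" for k
    unfolding C_def by (rule prod_inverse_sqrt_ge[OF assms[OF that]])
  have "exp (- 2) = exp (- (1 / 2)) * exp (- (1 / 2)) * exp (- (1 / 2)) * exp (- (1 / 2 :: real))"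
    by (simp flip: exp_add)
  also have "\<dots> \<le> C 0 * C 1 * C 2 * C 3"
    using C by (intro mult_mono_4) (auto intro: less_imp_le)
  finally have C_ge: "exp (- 2) \<le> C 0 * C 1 * C 2 * C 3" .
  have C_nonneg: "0 \<le> C k" if "k < 4" for k
    using C[OF that] exp_gt_zero[of "- (1 / 2) :: real"] by linarith
  have "braket (4 * n) (prod_amp (concat_state n ws)) (psi n T)
      = tpair n T (\<lambda>i. ws 0 i * of_real (C 0)) (\<lambda>i. ws 1 i * of_real (C 1))
          (\<lambda>i. ws 2 i * of_real (C 2)) (\<lambda>i. ws 3 i * of_real (C 3))"
    unfolding braket_psi_eq_tpair by (rule tpair_cong) (simp_all add: block_amp_concat_state C_def)
  also have "\<dots> = of_real (C 0 * C 1 * C 2 * C 3) * tpair n T (ws 0) (ws 1) (ws 2) (ws 3)"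
    by (simp add: tpair_scale)
  finally have "cmod (braket (4 * n) (prod_amp (concat_state n ws)) (psi n T))
      = (C 0 * C 1 * C 2 * C 3) * cmod (tpair n T (ws 0) (ws 1) (ws 2) (ws 3))"
    using C_nonneg by (simp add: norm_mult)
  then show "exp (- 2) * cmod (tpair n T (ws 0) (ws 1) (ws 2) (ws 3))
      \<le> cmod (braket (4 * n) (prod_amp (concat_state n ws)) (psi n T))"
    using C_ge by (simp add: mult_right_mono)
  show "pure_product_state (4 * n) (concat_state n ws)"
    by (rule pure_product_state_concat_state)
qed

lemma sum_square_normalized:
  assumes "nonzero_vec n x"
  shows "(\<Sum>i<n. (cmod (x i * of_real (1 / vnorm n x)))\<^sup>2) = 1"
proof -
  have "0 < vnorm n x"
    by (rule vnorm_pos[OF assms])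
  then have "(\<Sum>i<n. (cmod (x i * of_real (1 / vnorm n x)))\<^sup>2) = (\<Sum>i<n. (cmod (x i))\<^sup>2) / (vnorm n x)\<^sup>2"
    by (simp add: norm_divide power_divide flip: sum_divide_distrib)
  with \<open>0 < vnorm n x\<close> show ?thesis
    by (simp flip: vnorm_square)
qed

lemma exists_product_state_ge_ratio:
  assumes "nonzero_vec n x" "nonzero_vec n y" "nonzero_vec n u" "nonzero_vec n v"
  shows "\<exists>\<sigma>. pure_product_state (4 * n) \<sigma> \<and>
    exp (- 2) * (cmod (tpair n T x y u v) / (vnorm n x * vnorm n y * vnorm n u * vnorm n v))
      \<le> cmod (braket (4 * n) (prod_amp \<sigma>) (psi n T))"
proof -
  define unit where "unit z = (\<lambda>i. z i * of_real (1 / vnorm n z))" for z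
  define ws where "ws k = (if k = 0 then unit x else if k = 1 then unit y else if k = 2 then unit u else unit v)"
    for k :: nat
  have "tpair n T (ws 0) (ws 1) (ws 2) (ws 3) = tpair n T (unit x) (unit y) (unit u) (unit v)"
    by (simp add: ws_def)
  also have "\<dots> = of_real (1 / (vnorm n x * vnorm n y * vnorm n u * vnorm n v)) * tpair n T x y u v"
    unfolding unit_def tpair_scale by simp
  finally have "cmod (tpair n T (ws 0) (ws 1) (ws 2) (ws 3))
      = cmod (tpair n T x y u v) / (vnorm n x * vnorm n y * vnorm n u * vnorm n v)"
    by (simp add: norm_mult norm_divide abs_of_nonneg vnorm_nonneg)
  moreover have "(\<Sum>i<n. (cmod (ws k i))\<^sup>2) \<le> 1" if "k < 4" for k
    using assms sum_square_normalized by (auto simp: ws_def unit_def)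
  ultimately show ?thesis
    using exists_product_state_ge[of ws n T] by auto
qed

definition product_overlaps :: "nat \<Rightarrow> (nat \<Rightarrow> nat \<Rightarrow> nat \<Rightarrow> nat \<Rightarrow> complex) \<Rightarrow> real set" where
  "product_overlaps n T = {cmod (braket (4 * n) (prod_amp \<sigma>) (psi n T)) | \<sigma>. pure_product_state (4 * n) \<sigma>}"

lemma OPT_psi_eq_Sup: "OPT_psi n T = Sup (product_overlaps n T)"
  by (simp add: OPT_psi_def product_overlaps_def)

lemma product_overlaps_nonempty: "product_overlaps n T \<noteq> {}"
  unfolding product_overlaps_def using pure_product_state_concat_state by blast

lemma bdd_above_product_overlaps: "bdd_above (product_overlaps n T)"
  unfolding product_overlaps_def using norm_braket_product_psi_le_frob by (auto intro!: bdd_aboveI)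

lemma OPT_psi_ge:
  assumes "0 < n" "frob n T = 1"
  shows "exp (- 2) * OPT_T n T \<le> OPT_psi n T"
proof -
  have "r \<le> exp 2 * OPT_psi n T" if r_in: "r \<in> tensor_ratios n T" for r
  proof -
    obtain x y u v where r: "r = cmod (tpair n T x y u v) / (vnorm n x * vnorm n y * vnorm n u * vnorm n v)"
      and "nonzero_vec n x" "nonzero_vec n y" "nonzero_vec n u" "nonzero_vec n v"
      using r_in unfolding tensor_ratios_def by blast
    then obtain \<sigma> where \<sigma>: "pure_product_state (4 * n) \<sigma>"
      and le: "exp (- 2) * r \<le> cmod (braket (4 * n) (prod_amp \<sigma>) (psi n T))"
      using exists_product_state_ge_ratio by blast
    have "cmod (braket (4 * n) (prod_amp \<sigma>) (psi n T)) \<le> OPT_psi n T"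
      unfolding OPT_psi_eq_Sup
      by (rule cSup_upper[OF _ bdd_above_product_overlaps]) (use \<sigma> in \<open>auto simp: product_overlaps_def\<close>)
    with le have "exp (- 2) * r \<le> OPT_psi n T"
      by linarith
    then show ?thesis
      by (simp add: exp_minus field_simps)
  qed
  then have "OPT_T n T \<le> exp 2 * OPT_psi n T"
    unfolding OPT_T_eq_Sup by (intro cSup_least tensor_ratios_nonempty assms(1))
  then show ?thesis
    by (simp add: exp_minus field_simps)
qed

lemma OPT_psi_le:
  assumes "0 < n" "frob n T = 1" "0 < \<tau>" "\<tau> \<le> 1" "2 / \<tau> \<le> sqrt (real n)"
  shows "OPT_psi n T \<le> OPT_T n T * exp (2 * \<tau> - 2)
      + 4 * (max_entry n T * (2 / \<tau> * (2 * sqrt (real n)) * (2 * sqrt (real n)) * (2 * sqrt (real n))))"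
  unfolding OPT_psi_eq_Sup
  by (rule cSup_least[OF product_overlaps_nonempty])
    (use norm_braket_product_psi_le[OF assms(1,2) _ assms(3-5)] in \<open>auto simp: product_overlaps_def\<close>)

lemma exp_le_one_plus_double:
  fixes t :: real
  assumes "0 \<le> t" "t \<le> 1 / 2"
  shows "exp t \<le> 1 + 2 * t"
proof -
  have "exp t * (1 - t) \<le> exp t * exp (- t)"
    by (intro mult_left_mono one_minus_le_exp_neg) simp
  also have "\<dots> = 1"
    by (simp add: exp_minus)
  also have "1 \<le> (1 + 2 * t) * (1 - t)"
    using assms mult_left_mono[of "2 * t" 1 t] by (simp add: algebra_simps)
  finally show ?thesis
    using assms by simp
qed

lemma powr_tenth_facts:
  fixes n :: nat
  assumes "2 ^ 20 \<le> n"
  defines "a \<equiv> real n powr 0.1"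
  shows "4 \<le> a" "real n = a ^ 10" "real n powr 0.2 = a ^ 2" "sqrt (real n) = a ^ 5"
proof -
  have n: "(2 :: real) ^ 20 \<le> real n"
    using assms(1) by (metis of_nat_le_iff of_nat_numeral of_nat_power)
  then have "0 < a"
    by (simp add: a_def)
  have "(4 :: real) = (4 ^ 10) powr 0.1"
    by (simp add: powr_powr flip: powr_realpow)
  also have "\<dots> \<le> a"
    unfolding a_def using n by (intro powr_mono2) simp_all
  finally show "4 \<le> a" .
  have power: "a ^ k = real n powr (0.1 * real k)" for k
    using \<open>0 < a\<close> by (simp add: a_def powr_powr flip: powr_realpow)
  show "real n = a ^ 10" "real n powr 0.2 = a ^ 2"
    using n by (simp_all add: power)
  then show "sqrt (real n) = a ^ 5"
    using \<open>0 < a\<close> by (simp add: real_sqrt_unique power_mult[symmetric])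
qed

lemma scaled_exp_le:
  fixes a r :: real
  assumes "0 \<le> r" "r \<le> 1" "4 \<le> a"
  shows "r * exp (2 / a - 2) \<le> exp (- 2) * r + 10 / a"
proof -
  have "r * exp (2 / a - 2) = exp (- 2) * r * exp (2 / a)"
    by (simp add: exp_diff exp_minus field_simps)
  also have "\<dots> \<le> exp (- 2) * r * (1 + 4 / a)"
    using assms exp_le_one_plus_double[of "2 / a"] by (intro mult_left_mono) auto
  also have "\<dots> = exp (- 2) * r + exp (- 2) * r * (4 / a)"
    by (simp add: algebra_simps)
  also have "\<dots> \<le> exp (- 2) * r + 1 * (4 / a)"
    using assms by (intro add_left_mono mult_right_mono mult_le_one) auto
  also have "\<dots> \<le> exp (- 2) * r + 10 / a"
    using assms by (simp add: divide_right_mono)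
  finally show ?thesis .
qed

lemma error_term_le:
  fixes a m :: real
  assumes "4 \<le> a" "0 \<le> m"
  shows "4 * (m * (2 * a * (2 * a ^ 5) ^ 3)) \<le> 10 * ((a ^ 10)\<^sup>2 * m) / a ^ 2"
proof -
  have "4 * (m * (2 * a * (2 * a ^ 5) ^ 3)) = m * (64 * a ^ 16)"
    by algebra
  also have "\<dots> \<le> m * (10 * a ^ 2 * a ^ 16)"
    using assms power_mono[of 4 a 2] by (intro mult_left_mono mult_right_mono) auto
  also have "\<dots> = 10 * ((a ^ 10)\<^sup>2 * m) / a ^ 2"
    using assms by (simp add: field_simps flip: power_add power_mult)
  finally show ?thesis .
qed

lemma OPT_psi_le_powr:
  assumes "2 ^ 20 \<le> n" "frob n T = 1"
  shows "OPT_psi n T \<le> exp (- 2) * OPT_T n T + 10 / real n powr 0.1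
    + 10 * ((real n)\<^sup>2 * max_entry n T) / real n powr 0.2"
proof -
  define a where "a = real n powr 0.1"
  define m where "m = max_entry n T"
  note a = powr_tenth_facts[OF assms(1), folded a_def]
  have "0 < n"
    using assms(1) by simp
  have m: "0 \<le> m"
    unfolding m_def by (rule max_entry_nonneg[OF \<open>0 < n\<close>])
  have OPT: "0 \<le> OPT_T n T" "OPT_T n T \<le> 1"
    using OPT_T_bounds[OF \<open>0 < n\<close> assms(2)] by auto
  have "2 * a \<le> a ^ 4 * a"
    using a(1) power_mono[of 4 a 4] by (intro mult_right_mono) auto
  moreover have "a ^ 4 * a = a ^ 5"
    by algebra
  ultimately have "2 / (1 / a) \<le> sqrt (real n)"
    by (simp add: a(4))
  then have "OPT_psi n T \<le> OPT_T n T * exp (2 / a - 2) + 4 * (m * (2 * a * (2 * a ^ 5) ^ 3))"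
    using OPT_psi_le[OF \<open>0 < n\<close> assms(2), of "1 / a"] a(1) by (simp add: m_def a(4) power3_eq_cube)
  also have "OPT_T n T * exp (2 / a - 2) \<le> exp (- 2) * OPT_T n T + 10 / a"
    using OPT a(1) by (rule scaled_exp_le)
  also have "4 * (m * (2 * a * (2 * a ^ 5) ^ 3)) \<le> 10 * ((a ^ 10)\<^sup>2 * m) / a ^ 2"
    using a(1) m by (rule error_term_le)
  finally show ?thesis
    unfolding a_def[symmetric] m_def[symmetric] a(3) by (simp flip: a(2))
qed

theorem lemma7p5:
  shows "\<exists>n0::nat. \<forall>n\<ge>n0. \<forall>T :: nat \<Rightarrow> nat \<Rightarrow> nat \<Rightarrow> nat \<Rightarrow> complex.
    frob n T = 1 \<longrightarrow>
    (let M = (real n)\<^sup>2 * max_entry n T in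
      exp (-2) * OPT_T n T - 10 * M / real n powr 0.2 \<le> OPT_psi n T \<and>
      OPT_psi n T \<le> exp (-2) * OPT_T n T + 10 / real n powr 0.1 + 10 * M / real n powr 0.2)"
proof (intro exI[of _ "2 ^ 20"] allI impI)
  fix n :: nat and T :: "nat \<Rightarrow> nat \<Rightarrow> nat \<Rightarrow> nat \<Rightarrow> complex"
  assume n: "2 ^ 20 \<le> n" and T: "frob n T = 1"
  then have "0 < n"
    by simp
  have "0 \<le> 10 * ((real n)\<^sup>2 * max_entry n T) / real n powr 0.2"
    using max_entry_nonneg[OF \<open>0 < n\<close>] by simp
  then show "let M = (real n)\<^sup>2 * max_entry n T in
      exp (-2) * OPT_T n T - 10 * M / real n powr 0.2 \<le> OPT_psi n T \<and>
      OPT_psi n T \<le> exp (-2) * OPT_T n T + 10 / real n powr 0.1 + 10 * M / real n powr 0.2"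
    using OPT_psi_ge[OF \<open>0 < n\<close> T] OPT_psi_le_powr[OF n T] by (simp add: Let_def)
qed

end
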